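(* For every $n\in\mathbb N$ there exists $N\in\mathbb N$ such that every finite strongly connected digraph $D$ on at least $N$ vertices contains (1) a dipath of length at least $n$, or (2) an $n$-short $(n,0)$-system of dipaths.
   Context: All digraphs are finite; a dipath is a directed path, a dicycle a directed cycle, and lengths count edges. Let $x,y$ be two, possibly equal, vertices and $k,\ell\in\mathbb N$ (with $\ell=0$ allowed). A $(k,\ell)$-system of $x$--$y$ dipaths is a system of $k+\ell$ internally disjoint dipaths (or dicycles through $x$ in case $x=y$), $k$ of which are $x$--$y$ dipaths and $\ell$ of which are $y$--$x$ dipaths; a $(k,\ell)$-system of dipaths is a $(k,\ell)$-system of $x$--$y$ dipaths for some $x,y$. Such a system $\mathcal P$ is $n$-short if, in case $x\ne y$, $|V(P)\cup V(Q)|<n$ for every $x$--$y$ dipath $P\in\mathcal P$ and every $y$--$x$ dipath $Q\in\mathcal P$, and, in case $x=y$, every dicycle in $\mathcal P$ has length less than $n$. *)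

theory Defs
  imports Main
begin

definition digraph :: "'a set \<Rightarrow> ('a \<times> 'a) set \<Rightarrow> bool" where
  "digraph V E \<longleftrightarrow> finite V \<and> E \<subseteq> V \<times> V \<and> (\<forall>v. (v, v) \<notin> E)"

definition strongly_connected :: "'a set \<Rightarrow> ('a \<times> 'a) set \<Rightarrow> bool" where
  "strongly_connected V E \<longleftrightarrow> V \<noteq> {} \<and> (\<forall>u\<in>V. \<forall>v\<in>V. (u, v) \<in> E\<^sup>*)"

definition is_walk :: "'a set \<Rightarrow> ('a \<times> 'a) set \<Rightarrow> 'a list \<Rightarrow> bool" where
  "is_walk V E p \<longleftrightarrow> p \<noteq> [] \<and> set p \<subseteq> V \<and> (\<forall>i. Suc i < length p \<longrightarrow> (p ! i, p ! Suc i) \<in> E)"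

definition dipath :: "'a set \<Rightarrow> ('a \<times> 'a) set \<Rightarrow> 'a list \<Rightarrow> bool" where
  "dipath V E p \<longleftrightarrow> is_walk V E p \<and> distinct p"

definition path_len :: "'a list \<Rightarrow> nat" where
  "path_len p = length p - 1"

text \<open>An x--y dipath for x \<noteq> y; for x = y a dicycle through x, written [x, v1, ..., vk, x].\<close>
definition xy_dipath :: "'a set \<Rightarrow> ('a \<times> 'a) set \<Rightarrow> 'a \<Rightarrow> 'a \<Rightarrow> 'a list \<Rightarrow> bool" where
  "xy_dipath V E x y p \<longleftrightarrow> is_walk V E p \<and> hd p = x \<and> last p = y \<and>
     (if x = y then length p \<ge> 2 \<and> distinct (tl p) else distinct p)"

definition inner :: "'a \<Rightarrow> 'a \<Rightarrow> 'a list \<Rightarrow> 'a set" where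
  "inner x y p = set p - {x, y}"

text \<open>The combined family: indices i < k are the x--y dipaths P i, indices k \<le> i < k + l the
  y--x dipaths Q (i - k).\<close>
definition sys_member :: "nat \<Rightarrow> (nat \<Rightarrow> 'a list) \<Rightarrow> (nat \<Rightarrow> 'a list) \<Rightarrow> nat \<Rightarrow> 'a list" where
  "sys_member k P Q i = (if i < k then P i else Q (i - k))"

definition kl_system :: "'a set \<Rightarrow> ('a \<times> 'a) set \<Rightarrow> 'a \<Rightarrow> 'a \<Rightarrow> nat \<Rightarrow> nat
    \<Rightarrow> (nat \<Rightarrow> 'a list) \<Rightarrow> (nat \<Rightarrow> 'a list) \<Rightarrow> bool" where
  "kl_system V E x y k l P Q \<longleftrightarrow>
     (\<forall>i<k. xy_dipath V E x y (P i)) \<and> (\<forall>j<l. xy_dipath V E y x (Q j)) \<and>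
     (\<forall>i<k+l. \<forall>j<k+l. i \<noteq> j \<longrightarrow>
        sys_member k P Q i \<noteq> sys_member k P Q j \<and>
        inner x y (sys_member k P Q i) \<inter> inner x y (sys_member k P Q j) = {})"

definition n_short :: "nat \<Rightarrow> 'a \<Rightarrow> 'a \<Rightarrow> nat \<Rightarrow> nat
    \<Rightarrow> (nat \<Rightarrow> 'a list) \<Rightarrow> (nat \<Rightarrow> 'a list) \<Rightarrow> bool" where
  "n_short n x y k l P Q \<longleftrightarrow>
     (if x \<noteq> y then (\<forall>i<k. \<forall>j<l. card (set (P i) \<union> set (Q j)) < n)
      else (\<forall>i<k+l. path_len (sys_member k P Q i) < n))"

end

theory Submission
  imports Defs
begin

(* If no dipath has length n, every vertex is reached from a fixed root by a dipath with fewer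
   than n arcs, so bounded out-degree would bound |V|. Hence in a large digraph some vertex x has
   huge out-degree, and closing each out-arc of x by a shortest way back to x gives a large fan of
   dicycles through x, of length at most n, leaving x along distinct arcs.
   In a large fan of x--t dipaths take a maximal internally disjoint subfamily. If it has fewer
   than m members, its few inner vertices meet all other members, so some inner vertex z lies on
   many of them; cutting these at z yields a large fan of strictly shorter x--z dipaths, still
   leaving x along distinct arcs. As lengths drop, after at most n rounds we get m internally
   disjoint x--y dipaths. If y = x and one of these dicycles has length n, gluing it to another
   one gives a dipath of length at least n. *)

lemma is_walk_Cons_Cons:
  "is_walk V E (a # b # p) \<longleftrightarrow> a \<in> V \<and> (a, b) \<in> E \<and> is_walk V E (b # p)"
  unfolding is_walk_def by (auto simp: less_Suc_eq_0_disj All_less_Suc2)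

lemma is_walk_singleton [simp]: "is_walk V E [a] \<longleftrightarrow> a \<in> V"
  by (simp add: is_walk_def)

lemma is_walk_append:
  assumes "p \<noteq> []" "q \<noteq> []"
  shows "is_walk V E (p @ q) \<longleftrightarrow> is_walk V E p \<and> is_walk V E q \<and> (last p, hd q) \<in> E"
  using assms
proof (induction p rule: induct_list012)
  case (2 a)
  then show ?case by (cases q) (auto simp: is_walk_Cons_Cons)
next
  case (3 a b p)
  then show ?case by (auto simp: is_walk_Cons_Cons)
qed simp

lemma is_walk_drop: "is_walk V E p \<Longrightarrow> k < length p \<Longrightarrow> is_walk V E (drop k p)"
  unfolding is_walk_def by (auto simp: nth_drop dest: in_set_dropD)

lemma rtrancl_imp_dipath:
  assumes "(u, v) \<in> E\<^sup>*" "v \<in> V" "E \<subseteq> V \<times> V"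
  shows "\<exists>q. dipath V E q \<and> hd q = u \<and> last q = v"
  using assms(1)
proof (induction rule: converse_rtrancl_induct)
  case base
  then show ?case using assms(2) by (intro exI[of _ "[v]"]) (simp add: dipath_def)
next
  case (step u w)
  then obtain q where q: "dipath V E q" "hd q = w" "last q = v" by blast
  then obtain q' where q': "q = w # q'" by (cases q) (auto simp: dipath_def is_walk_def)
  show ?case
  proof (cases "u \<in> set q")
    case True
    then obtain k where k: "k < length q" "q ! k = u" by (auto simp: in_set_conv_nth)
    then have "dipath V E (drop k q)" using q(1) by (auto simp: dipath_def is_walk_drop)
    then show ?thesis using k q(3) by (intro exI[of _ "drop k q"]) (simp add: hd_drop_conv_nth)
  next
    case False
    have "is_walk V E (u # q)"
      using q q' step.hyps(1) assms(3) by (auto simp: dipath_def is_walk_Cons_Cons)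
    then show ?thesis using False q q' by (intro exI[of _ "u # q"]) (simp add: dipath_def)
  qed
qed

lemma card_UN_le_card_mult:
  assumes "finite I" "\<And>i. i \<in> I \<Longrightarrow> card (A i) \<le> c"
  shows "card (\<Union>i\<in>I. A i) \<le> card I * c"
proof -
  have "card (\<Union>i\<in>I. A i) \<le> (\<Sum>i\<in>I. card (A i))" using card_UN_le[OF assms(1)] .
  also have "\<dots> \<le> card I * c" using sum_bounded_above[of I "\<lambda>i. card (A i)" c] assms(2) by simp
  finally show ?thesis .
qed

primrec out_ball :: "('a \<times> 'a) set \<Rightarrow> 'a \<Rightarrow> nat \<Rightarrow> 'a set" where
  "out_ball E r 0 = {r}"
| "out_ball E r (Suc k) = out_ball E r k \<union> E `` out_ball E r k"

lemma out_ball_mono: "k \<le> l \<Longrightarrow> out_ball E r k \<subseteq> out_ball E r l"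
  by (induction l) (auto simp: le_Suc_eq)

lemma out_ball_subset: "r \<in> V \<Longrightarrow> E \<subseteq> V \<times> V \<Longrightarrow> out_ball E r k \<subseteq> V"
  by (induction k) auto

lemma last_walk_in_out_ball: "is_walk V E p \<Longrightarrow> last p \<in> out_ball E (hd p) (length p - 1)"
proof (induction p rule: rev_induct)
  case (snoc v p)
  show ?case
  proof (cases "p = []")
    case False
    then have "is_walk V E p" "(last p, v) \<in> E" using snoc.prems is_walk_append[of p "[v]"] by auto
    moreover have "length p = Suc (length p - 1)" using False by simp
    ultimately have "v \<in> out_ball E (hd p) (length p)"
      using snoc.IH by (metis ImageI out_ball.simps(2) UnI2)
    then show ?thesis using False by simp
  qed simp
qed (simp add: is_walk_def)

lemma card_out_ball_le:
  assumes "finite V" "E \<subseteq> V \<times> V" "r \<in> V" "\<forall>v\<in>V. card (E `` {v}) \<le> D"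
  shows "card (out_ball E r k) \<le> (D + 1) ^ k"
proof (induction k)
  case (Suc k)
  let ?B = "out_ball E r k"
  have B: "?B \<subseteq> V" "finite ?B"
    using out_ball_subset[OF assms(3,2)] finite_subset[OF _ assms(1)] by blast+
  have "card (E `` ?B) \<le> card ?B * D"
    using card_UN_le_card_mult[OF B(2), of "\<lambda>v. E `` {v}" D] assms(4) B(1)
    by (simp only: Image_eq_UN[symmetric]) blast
  have "card (out_ball E r (Suc k)) \<le> card ?B + card (E `` ?B)" by (simp add: card_Un_le)
  also have "\<dots> \<le> card ?B * (D + 1)" using \<open>card (E `` ?B) \<le> card ?B * D\<close> by simp
  also have "\<dots> \<le> (D + 1) ^ Suc k" using mult_le_mono1[OF Suc.IH] by (metis power_Suc2)
  finally show ?case .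
qed simp

lemma card_le_if_dipaths_short:
  assumes "digraph V E" "strongly_connected V E"
    and short: "\<forall>p. dipath V E p \<longrightarrow> path_len p < n"
    and deg: "\<forall>v\<in>V. card (E `` {v}) \<le> D"
  shows "card V \<le> (D + 1) ^ (n - 1)"
proof -
  obtain r where r: "r \<in> V" using assms(2) by (auto simp: strongly_connected_def)
  have V: "finite V" "E \<subseteq> V \<times> V" using assms(1) by (auto simp: digraph_def)
  have "V \<subseteq> out_ball E r (n - 1)"
  proof
    fix v assume v: "v \<in> V"
    then have "(r, v) \<in> E\<^sup>*" using assms(2) r by (auto simp: strongly_connected_def)
    then obtain q where q: "dipath V E q" "hd q = r" "last q = v"
      using rtrancl_imp_dipath v V(2) by metis
    then have "v \<in> out_ball E r (length q - 1)"
      using last_walk_in_out_ball[of V E q] by (simp add: dipath_def)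
    moreover have "length q - 1 \<le> n - 1" using short q(1) unfolding path_len_def by fastforce
    ultimately show "v \<in> out_ball E r (n - 1)" by (meson out_ball_mono subsetD)
  qed
  then have "card V \<le> card (out_ball E r (n - 1))"
    using card_mono[OF finite_subset[OF out_ball_subset[OF r V(2)] V(1)]] by blast
  also have "\<dots> \<le> (D + 1) ^ (n - 1)" using card_out_ball_le[OF V r deg] .
  finally show ?thesis .
qed

definition internally_disjoint :: "'a \<Rightarrow> 'a \<Rightarrow> 'a list set \<Rightarrow> bool" where
  "internally_disjoint x y H \<longleftrightarrow> (\<forall>p\<in>H. \<forall>q\<in>H. p \<noteq> q \<longrightarrow> inner x y p \<inter> inner x y q = {})"

definition prefix_until :: "'a \<Rightarrow> 'a list \<Rightarrow> 'a list" where
  "prefix_until z p = takeWhile (\<lambda>v. v \<noteq> z) p @ [z]"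

lemma prefix_until_xy_dipath:
  assumes p: "xy_dipath V E x t p" and z: "z \<in> inner x t p"
  shows "xy_dipath V E x z (prefix_until z p)" "length (prefix_until z p) < length p"
    "prefix_until z p ! 1 = p ! 1"
proof -
  have w: "is_walk V E p" "hd p = x" "last p = t" using p by (auto simp: xy_dipath_def)
  obtain a b where ab: "p = a @ z # b" using z split_list by (fastforce simp: inner_def)
  have "z \<noteq> x" "z \<noteq> t" using z by (auto simp: inner_def)
  then obtain a' where a': "a = x # a'" and "b \<noteq> []" using ab w by (cases a; cases b) auto
  have dist: "distinct (a' @ z # b)" using p ab a' by (auto simp: xy_dipath_def split: if_splits)
  have "x \<notin> set a'"
  proof (cases "x = t")
    case True
    then have "x \<in> set b"
      using w ab \<open>b \<noteq> []\<close> by (metis last_ConsR last_appendR last_in_set list.distinct(1))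
    then show ?thesis using dist by auto
  qed (use p ab a' in \<open>auto simp: xy_dipath_def\<close>)
  moreover have "prefix_until z p = a @ [z]"
    using dist a' \<open>z \<noteq> x\<close> unfolding ab prefix_until_def
    by (subst takeWhile_append2) auto
  moreover have "is_walk V E (a @ [z])"
    using w ab \<open>b \<noteq> []\<close> is_walk_append[of "a @ [z]" b] by simp
  moreover have "distinct (a @ [z])" using a' dist \<open>z \<noteq> x\<close> \<open>x \<notin> set a'\<close> by simp
  ultimately show "xy_dipath V E x z (prefix_until z p)"
    using a' \<open>z \<noteq> x\<close> by (simp add: xy_dipath_def)
  show "length (prefix_until z p) < length p"
    using \<open>prefix_until z p = a @ [z]\<close> ab \<open>b \<noteq> []\<close> by simp
  show "prefix_until z p ! 1 = p ! 1"
    using \<open>prefix_until z p = a @ [z]\<close> ab a' by (cases a') simp_all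
qed

lemma inner_card_le: "card (inner x y p) \<le> length p"
  unfolding inner_def by (meson List.finite_set card_length card_mono Diff_subset order_trans)

lemma exists_maximal_internally_disjoint_subset:
  assumes "finite F"
  shows "\<exists>H\<subseteq>F. internally_disjoint x t H \<and>
    (\<forall>p\<in>F - H. \<exists>q\<in>H. inner x t p \<inter> inner x t q \<noteq> {})"
  using assms
proof (induction F rule: finite_induct)
  case empty
  then show ?case by (simp add: internally_disjoint_def)
next
  case (insert p F)
  then obtain H where H: "H \<subseteq> F" "internally_disjoint x t H"
    "\<forall>p\<in>F - H. \<exists>q\<in>H. inner x t p \<inter> inner x t q \<noteq> {}" by blast
  show ?case
  proof (cases "\<exists>q\<in>H. inner x t p \<inter> inner x t q \<noteq> {}")
    case True
    then show ?thesis using H by (intro exI[of _ H]) auto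
  next
    case False
    then have "internally_disjoint x t (insert p H)"
      using H(2) by (auto simp: internally_disjoint_def)
    then show ?thesis using H by (intro exI[of _ "insert p H"]) auto
  qed
qed

(* Distinct second vertices p ! 1 keep the members distinct when they are cut at a common
   vertex. *)
definition fan :: "'a set \<Rightarrow> ('a \<times> 'a) set \<Rightarrow> 'a \<Rightarrow> 'a \<Rightarrow> nat \<Rightarrow> 'a list set \<Rightarrow> bool" where
  "fan V E x y k F \<longleftrightarrow>
     finite F \<and> (\<forall>p\<in>F. xy_dipath V E x y p \<and> length p \<le> k) \<and> inj_on (\<lambda>p. p ! 1) F"

lemma fan_subset: "fan V E x y k F \<Longrightarrow> H \<subseteq> F \<Longrightarrow> fan V E x y k H"
  unfolding fan_def by (meson finite_subset inj_on_subset subsetD)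

lemma fan_mono: "fan V E x y k F \<Longrightarrow> k \<le> l \<Longrightarrow> fan V E x y l F"
  unfolding fan_def by fastforce

lemma fan_prefix_until:
  fixes z :: 'a
  assumes "fan V E x t (Suc k) F"
  defines "A \<equiv> {p \<in> F. z \<in> inner x t p}"
  shows "fan V E x z k (prefix_until z ` A)" "card (prefix_until z ` A) = card A"
proof -
  have paths: "xy_dipath V E x t p" "length p \<le> Suc k" if "p \<in> A" for p
    using assms that by (auto simp: fan_def)
  have first: "prefix_until z p ! 1 = p ! 1" if "p \<in> A" for p
    using prefix_until_xy_dipath(3)[OF paths(1)] that by (simp add: A_def)
  have "inj_on (\<lambda>p. p ! 1) A" using assms(1) by (auto simp: fan_def A_def intro: inj_on_subset)
  then have "inj_on (prefix_until z) A" "inj_on (\<lambda>p. p ! 1) (prefix_until z ` A)"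
    using first unfolding inj_on_def by (metis, auto)
  moreover have "finite A" using assms(1) by (simp add: fan_def A_def)
  moreover have "xy_dipath V E x z q \<and> length q \<le> k" if "q \<in> prefix_until z ` A" for q
    using that prefix_until_xy_dipath(1,2)[OF paths(1)] paths(2) by (fastforce simp: A_def)
  ultimately show "fan V E x z k (prefix_until z ` A)" "card (prefix_until z ` A) = card A"
    by (auto simp: fan_def card_image)
qed

lemma fan_disjoint_or_concentrated:
  assumes F: "fan V E x t (Suc k) F" and big: "m + m * Suc k * c \<le> card F"
  shows "(\<exists>H\<subseteq>F. card H = m \<and> internally_disjoint x t H) \<or>
    (\<exists>z F'. fan V E x z k F' \<and> c \<le> card F')"
proof -
  have finF: "finite F" using F by (simp add: fan_def)
  obtain H where H: "H \<subseteq> F" "internally_disjoint x t H"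
    and cover: "\<forall>p\<in>F - H. \<exists>q\<in>H. inner x t p \<inter> inner x t q \<noteq> {}"
    using exists_maximal_internally_disjoint_subset[OF finF, of x t] by auto
  have finH: "finite H" using H(1) finF finite_subset by blast
  show ?thesis
  proof (cases "m \<le> card H")
    case True
    then obtain H' where "H' \<subseteq> H" "card H' = m" by (rule obtain_subset_with_card_n)
    moreover have "internally_disjoint x t H'"
      using H(2) \<open>H' \<subseteq> H\<close> unfolding internally_disjoint_def by blast
    ultimately show ?thesis using H(1) by (intro disjI1 exI[of _ H']) blast
  next
    case False
    define U where "U = (\<Union>q\<in>H. inner x t q)"
    define A where "A z = {p \<in> F. z \<in> inner x t p}" for z
    have "card (inner x t q) \<le> Suc k" if "q \<in> H" for q
      using that H(1) F inner_card_le[of x t q] by (force simp: fan_def)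
    then have "card U \<le> card H * Suc k" unfolding U_def by (rule card_UN_le_card_mult[OF finH])
    also have "\<dots> \<le> m * Suc k" using False by (intro mult_le_mono1) simp
    finally have cardU: "card U \<le> m * Suc k" .
    have finU: "finite U" unfolding U_def inner_def using finH by auto
    have "F - H \<subseteq> (\<Union>z\<in>U. A z)" using cover unfolding U_def A_def by blast
    have "\<exists>z\<in>U. c \<le> card (A z)"
    proof (rule ccontr)
      assume "\<not> ?thesis"
      then have "\<forall>z\<in>U. card (A z) \<le> c" by auto
      have "card F - card H = card (F - H)" using H(1) finH by (simp add: card_Diff_subset)
      also have "\<dots> \<le> card (\<Union>z\<in>U. A z)"
        using \<open>F - H \<subseteq> (\<Union>z\<in>U. A z)\<close> finU finF by (intro card_mono) (auto simp: A_def)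
      also have "\<dots> \<le> card U * c"
        using card_UN_le_card_mult[OF finU] \<open>\<forall>z\<in>U. card (A z) \<le> c\<close> by blast
      also have "\<dots> \<le> m * Suc k * c" using cardU by simp
      finally show False using False big by linarith
    qed
    then obtain z where "c \<le> card (A z)" by blast
    moreover have "fan V E x z k (prefix_until z ` A z)" "card (prefix_until z ` A z) = card (A z)"
      using fan_prefix_until[OF F, of z] by (simp_all add: A_def)
    ultimately show ?thesis by (intro disjI2 exI[of _ z] exI[of _ "prefix_until z ` A z"]) simp
  qed
qed

fun fan_size_bound :: "nat \<Rightarrow> nat \<Rightarrow> nat" where
  "fan_size_bound 0 m = 1"
| "fan_size_bound (Suc k) m = m + m * Suc k * fan_size_bound k m"

lemma fan_contains_internally_disjoint:
  assumes "fan V E x t k F" "fan_size_bound k m \<le> card F"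
  shows "\<exists>y H. fan V E x y k H \<and> card H = m \<and> internally_disjoint x y H"
  using assms
proof (induction k arbitrary: t F)
  case 0
  then obtain p where "p \<in> F" by fastforce
  then show ?case using "0.prems"(1) by (auto simp: fan_def xy_dipath_def is_walk_def)
next
  case (Suc k)
  have "m + m * Suc k * fan_size_bound k m \<le> card F" using Suc.prems(2) by simp
  from fan_disjoint_or_concentrated[OF Suc.prems(1) this]
  consider H where "H \<subseteq> F" "card H = m" "internally_disjoint x t H"
    | z F' where "fan V E x z k F'" "fan_size_bound k m \<le> card F'"
    by blast
  then show ?case
  proof cases
    case 1
    then show ?thesis using fan_subset[OF Suc.prems(1)] by blast
  next
    case 2
    then show ?thesis using Suc.IH fan_mono[of V E x _ k _ "Suc k"] by (meson le_SucI order_refl)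
  qed
qed

lemma exists_dicycle_fan:
  assumes "digraph V E" "strongly_connected V E" "x \<in> V"
    and short: "\<forall>p. dipath V E p \<longrightarrow> path_len p < n"
  shows "\<exists>F. fan V E x x (Suc n) F \<and> card F = card (E `` {x})"
proof -
  have V: "finite V" "E \<subseteq> V \<times> V" using assms(1) by (auto simp: digraph_def)
  have out: "E `` {x} \<subseteq> V" using V(2) by blast
  have "\<forall>s\<in>E `` {x}. \<exists>q. dipath V E q \<and> hd q = s \<and> last q = x"
  proof
    fix s assume "s \<in> E `` {x}"
    then have "(s, x) \<in> E\<^sup>*" using assms(2,3) out by (auto simp: strongly_connected_def)
    then show "\<exists>q. dipath V E q \<and> hd q = s \<and> last q = x"
      using rtrancl_imp_dipath assms(3) V(2) by metis
  qed
  then obtain return where return: "\<forall>s\<in>E `` {x}.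
      dipath V E (return s) \<and> hd (return s) = s \<and> last (return s) = x"
    by (metis bchoice)
  define cycle where "cycle s = x # return s" for s
  have cycle: "xy_dipath V E x x (cycle s) \<and> length (cycle s) \<le> Suc n \<and> cycle s ! 1 = s"
    if s: "s \<in> E `` {x}" for s
  proof -
    have ret: "dipath V E (return s)" "hd (return s) = s" "last (return s) = x"
      using return s by blast+
    then obtain r where r: "return s = s # r"
      by (cases "return s") (auto simp: dipath_def is_walk_def)
    have "(x, s) \<in> E" using s by blast
    then have "is_walk V E (x # s # r)"
      using ret(1) r assms(3) is_walk_Cons_Cons[of V E x s r] by (simp add: dipath_def)
    moreover have "length (return s) \<le> n" using short ret(1) by (fastforce simp: path_len_def)
    moreover have "distinct (s # r)" "last (s # r) = x" using ret r by (simp_all add: dipath_def)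
    ultimately show ?thesis using r by (simp add: xy_dipath_def cycle_def)
  qed
  then have "inj_on cycle (E `` {x})" "inj_on (\<lambda>p. p ! 1) (cycle ` (E `` {x}))"
    unfolding inj_on_def by (metis, fastforce)
  moreover have "finite (E `` {x})" using finite_subset[OF out V(1)] .
  ultimately have "fan V E x x (Suc n) (cycle ` (E `` {x}))"
    using cycle by (auto simp: fan_def)
  then show ?thesis using card_image[OF \<open>inj_on cycle (E `` {x})\<close>] by blast
qed

lemma dipath_of_disjoint_dicycles:
  assumes loopless: "\<forall>v. (v, v) \<notin> E"
    and p: "xy_dipath V E x x p" and q: "xy_dipath V E x x q"
    and disj: "inner x x p \<inter> inner x x q = {}"
  shows "\<exists>r. dipath V E r \<and> path_len p \<le> path_len r"
proof -
  obtain c where "p = x # c" using p by (cases p) (auto simp: xy_dipath_def)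
  moreover from this have "c \<noteq> []" using p by (auto simp: xy_dipath_def)
  ultimately have c: "p = x # c" "c \<noteq> []" "last c = x" "distinct c"
    using p by (auto simp: xy_dipath_def)
  have "is_walk V E c" using p c is_walk_drop[of V E p 1] by (simp add: xy_dipath_def)
  obtain s d where d: "q = x # s # d" "last (s # d) = x" "distinct (s # d)"
    using q by (cases q rule: remdups_adj.cases) (auto simp: xy_dipath_def)
  have "(x, s) \<in> E" "is_walk V E (s # d)"
    using q d by (auto simp: xy_dipath_def is_walk_Cons_Cons)
  then have "s \<noteq> x" using loopless by auto
  define b where "b = butlast (s # d)"
  have sd: "s # d = b @ [x]"
    using append_butlast_last_id[of "s # d"] d(2) unfolding b_def by (metis list.distinct(1))
  then have b: "b \<noteq> []" "hd b = s" "is_walk V E b" "distinct b" "x \<notin> set b"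
    using \<open>s \<noteq> x\<close> \<open>is_walk V E (s # d)\<close> d(3) is_walk_append[of b "[x]"]
    by (cases b; auto)+
  have "set b \<subseteq> inner x x q" "set c - {x} \<subseteq> inner x x p"
    using b(5) sd c(1) d(1) by (auto simp: inner_def)
  then have "set c \<inter> set b = {}" using disj b(5) by blast
  then have "dipath V E (c @ b)"
    using \<open>is_walk V E c\<close> b c \<open>(x, s) \<in> E\<close> is_walk_append[of c b]
    by (simp add: dipath_def)
  moreover have "path_len p \<le> path_len (c @ b)"
    using c(1) b(1) by (cases b) (simp_all add: path_len_def)
  ultimately show ?thesis by blast
qed

lemma kl_system_of_internally_disjoint_fan:
  assumes "fan V E x y k H" "card H = m" "internally_disjoint x y H"
    and short: "x = y \<longrightarrow> (\<forall>p\<in>H. path_len p < n)"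
  shows "\<exists>P Q. kl_system V E x y m 0 P Q \<and> n_short n x y m 0 P Q"
proof -
  obtain P where P: "bij_betw P {..<m} H"
    using ex_bij_betw_nat_finite assms(1,2) by (metis atLeast0LessThan fan_def)
  then have "P i \<in> H" "i < m \<Longrightarrow> j < m \<Longrightarrow> i \<noteq> j \<Longrightarrow> P i \<noteq> P j" if "i < m" for i j
    using that by (auto simp: bij_betw_def inj_on_def)
  then have "kl_system V E x y m 0 P P" "n_short n x y m 0 P P"
    using assms(1,3) short
    by (auto simp: kl_system_def n_short_def sys_member_def fan_def internally_disjoint_def)
  then show ?thesis by blast
qed

lemma long_dipath_or_short_system:
  assumes "2 \<le> n" "digraph V E" "strongly_connected V E"
    and big: "fan_size_bound (Suc n) n ^ (n - 1) < card V"
  shows "(\<exists>p. dipath V E p \<and> n \<le> path_len p) \<or>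
    (\<exists>x y P Q. kl_system V E x y n 0 P Q \<and> n_short n x y n 0 P Q)"
proof (cases "\<exists>p. dipath V E p \<and> n \<le> path_len p")
  case False
  then have short: "\<forall>p. dipath V E p \<longrightarrow> path_len p < n" by auto
  define M where "M = fan_size_bound (Suc n) n"
  have "1 \<le> M" using assms(1) by (simp add: M_def)
  obtain x where "x \<in> V" "M \<le> card (E `` {x})"
  proof (rule ccontr)
    assume "\<not> thesis"
    then have "\<forall>v\<in>V. card (E `` {v}) \<le> M - 1" using that by force
    then have "card V \<le> (M - 1 + 1) ^ (n - 1)"
      using card_le_if_dipaths_short[OF assms(2,3) short] by blast
    then show False using big[folded M_def] \<open>1 \<le> M\<close> by simp
  qed
  moreover obtain F where "fan V E x x (Suc n) F" "card F = card (E `` {x})"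
    using exists_dicycle_fan[OF assms(2,3) \<open>x \<in> V\<close> short] by blast
  ultimately obtain y H where H: "fan V E x y (Suc n) H" "card H = n" "internally_disjoint x y H"
    using fan_contains_internally_disjoint[of V E x x "Suc n" F n] by (auto simp: M_def)
  have "path_len p < n" if "x = y" "p \<in> H" for p
  proof (rule ccontr)
    assume "\<not> path_len p < n"
    obtain q where "q \<in> H" "q \<noteq> p"
      using card_mono[of "{p}" H] \<open>card H = n\<close> assms(1) by force
    then have "inner x x p \<inter> inner x x q = {}" "xy_dipath V E x x p" "xy_dipath V E x x q"
      using H that by (auto simp: internally_disjoint_def fan_def)
    then obtain r where "dipath V E r" "path_len p \<le> path_len r"
      using dipath_of_disjoint_dicycles assms(2) by (metis digraph_def)
    then show False using short \<open>\<not> path_len p < n\<close> by fastforce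
  qed
  then show ?thesis using kl_system_of_internally_disjoint_fan[OF H] by blast
qed blast

lemma exists_dipath_with_arc:
  assumes "digraph V E" "strongly_connected V E" "2 \<le> card V"
  shows "\<exists>p. dipath V E p \<and> 1 \<le> path_len p"
proof -
  obtain u v where "u \<in> V" "v \<in> V" "u \<noteq> v"
    using assms(3) by (auto simp: numeral_2_eq_2 card_le_Suc_iff)
  moreover have "E \<subseteq> V \<times> V" using assms(1) by (simp add: digraph_def)
  ultimately obtain q where "dipath V E q" "hd q = u" "last q = v"
    using rtrancl_imp_dipath assms(2) by (metis strongly_connected_def)
  moreover have "2 \<le> length q"
    using calculation \<open>u \<noteq> v\<close>
    by (cases q rule: remdups_adj.cases) (auto simp: dipath_def is_walk_def)
  ultimately show ?thesis by (auto simp: path_len_def)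
qed

theorem theorem3p3:
  shows "\<forall>n::nat. \<exists>N::nat. \<forall>(V::'a set) E. digraph V E \<and> strongly_connected V E \<and> card V \<ge> N \<longrightarrow>
     (\<exists>p. dipath V E p \<and> path_len p \<ge> n) \<or>
     (\<exists>x y P Q. kl_system V E x y n 0 P Q \<and> n_short n x y n 0 P Q)"
proof
  fix n :: nat
  show "\<exists>N::nat. \<forall>(V::'a set) E. digraph V E \<and> strongly_connected V E \<and> card V \<ge> N \<longrightarrow>
     (\<exists>p. dipath V E p \<and> path_len p \<ge> n) \<or>
     (\<exists>x y P Q. kl_system V E x y n 0 P Q \<and> n_short n x y n 0 P Q)"
  proof (cases "2 \<le> n")
    case True
    then show ?thesis
      using long_dipath_or_short_system[OF True]
      by (intro exI[of _ "Suc (fan_size_bound (Suc n) n ^ (n - 1))"]) (auto simp: Suc_le_eq)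
  next
    case False
    then have "1 \<le> path_len p \<Longrightarrow> n \<le> path_len p" for p :: "'a list" by linarith
    then show ?thesis using exists_dipath_with_arc by (intro exI[of _ 2]) blast
  qed
qed

end
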